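(* Let $G$ be a connected Lie group with identity $e$ and consider a discrete-time linear control system on $G$ with control range $U\subset\mathbb{R}^m$ a compact neighborhood of $0$. Let $g\in\mathcal{R}$ be such that $f_0^k(g)\in\mathcal{R}$ for all $k\in\mathbb{Z}$. Then $\mathcal{R}\cdot g\subset\mathcal{R}$.
   Context: A discrete-time linear control system on $G$ is given by $f:G\times U\to G$, $f_u:=f(\cdot,u)$, such that $f_0$ is an automorphism of $G$ and $f_u(g)=f_u(e)f_0(g)$ for all $g\in G,u\in U$. Solutions: $\varphi(0,g,u)=g$, $\varphi(k,g,u)=f_{u_{k-1}}\circ\cdots\circ f_{u_0}(g)$ for $u=(u_i)\in U^{\mathbb{N}_0}$; $\mathcal{R}=\bigcup_{k\in\mathbb{N}}\{\varphi(k,e,u)\}$. *)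

theory Defs
  imports "HOL-Analysis.Analysis" "HOL-Algebra.Group"
begin

text \<open>A connected Lie group is modelled as a HOL-Algebra group G whose carrier
carries a topology T making it a connected Hausdorff topological group that is
locally Euclidean of dimension CARD('n). (Smooth structure cannot be expressed.)\<close>

definition connected_loc_euclidean_group ::
  "('g, 'b) monoid_scheme \<Rightarrow> 'g topology \<Rightarrow> 'n::finite itself \<Rightarrow> bool" where
  "connected_loc_euclidean_group G T (_::'n itself) \<longleftrightarrow>
     group G \<and> topspace T = carrier G \<and>
     continuous_map (prod_topology T T) T (\<lambda>(x, y). x \<otimes>\<^bsub>G\<^esub> y) \<and>
     continuous_map T T (\<lambda>x. inv\<^bsub>G\<^esub> x) \<and>
     Hausdorff_space T \<and> connected_space T \<and>
     (\<forall>x\<in>topspace T. \<exists>V W. openin T V \<and> x \<in> V \<and> open (W :: (real^'n) set) \<and>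
         (subtopology T V) homeomorphic_space (subtopology euclidean W))"

definition linear_control_system ::
  "('g, 'b) monoid_scheme \<Rightarrow> 'g topology \<Rightarrow> (real^'m) set \<Rightarrow> ('g \<Rightarrow> real^'m \<Rightarrow> 'g) \<Rightarrow> bool" where
  "linear_control_system G T U f \<longleftrightarrow>
     (\<forall>g\<in>carrier G. \<forall>u\<in>U. f g u \<in> carrier G) \<and>
     continuous_map (prod_topology T (subtopology euclidean U)) T (\<lambda>(g, u). f g u) \<and>
     (\<lambda>g. f g 0) \<in> iso G G \<and>
     homeomorphic_map T T (\<lambda>g. f g 0) \<and>
     (\<forall>g\<in>carrier G. \<forall>u\<in>U. f g u = f \<one>\<^bsub>G\<^esub> u \<otimes>\<^bsub>G\<^esub> f g 0)"

primrec phi :: "('g \<Rightarrow> 'c \<Rightarrow> 'g) \<Rightarrow> nat \<Rightarrow> 'g \<Rightarrow> (nat \<Rightarrow> 'c) \<Rightarrow> 'g" where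
  "phi f 0 g u = g"
| "phi f (Suc k) g u = f (phi f k g u) (u k)"

definition reach_set :: "('g, 'b) monoid_scheme \<Rightarrow> 'c set \<Rightarrow> ('g \<Rightarrow> 'c \<Rightarrow> 'g) \<Rightarrow> 'g set" where
  "reach_set G U f = {phi f k \<one>\<^bsub>G\<^esub> u | k u. k \<ge> 1 \<and> (\<forall>i. u i \<in> U)}"

definition f0_pow :: "('g, 'b) monoid_scheme \<Rightarrow> ('g \<Rightarrow> 'g) \<Rightarrow> int \<Rightarrow> 'g \<Rightarrow> 'g" where
  "f0_pow G f0 k g = (if k \<ge> 0 then (f0 ^^ nat k) g
                      else (inv_into (carrier G) f0 ^^ nat (- k)) g)"

end

theory Submission
  imports Defs
begin

text \<open>Let \<open>h = \<phi>(k, e, u) \<in> \<R>\<close> and \<open>x = f\<^sub>0\<^sup>-\<^sup>k(g)\<close>, which lies in \<open>\<R>\<close> by hypothesis.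
  Linearity gives \<open>\<phi>(k, x, u) = \<phi>(k, e, u) \<cdot> f\<^sub>0\<^sup>k(x) = h \<cdot> g\<close>, and \<open>\<phi>(k, x, u)\<close> is reached
  from \<open>e\<close> by first steering to \<open>x\<close> and then applying \<open>u\<close>.\<close>

lemma phi_append_controls:
  "phi f (j + k) x (\<lambda>i. if i < j then v i else u (i - j)) = phi f k (phi f j x v) u"
proof (induction k)
  case 0
  have "m \<le> j \<Longrightarrow> phi f m x (\<lambda>i. if i < j then v i else u (i - j)) = phi f m x v" for m
    by (induction m) auto
  then show ?case by simp
qed simp

lemma funpow_inv_into_right:
  assumes "bij_betw h A A" "y \<in> A"
  shows "(h ^^ n) ((inv_into A h ^^ n) y) = y"
  using assms(2)
proof (induction n arbitrary: y)
  case (Suc n)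
  have "inv_into A h y \<in> A"
    using assms(1) Suc.prems by (metis bij_betw_imp_surj_on inv_into_into)
  moreover have "(inv_into A h ^^ Suc n) y = (inv_into A h ^^ n) (inv_into A h y)"
    by (simp add: funpow_Suc_right del: funpow.simps)
  ultimately have "(h ^^ Suc n) ((inv_into A h ^^ Suc n) y) = h (inv_into A h y)"
    using Suc.IH by simp
  also have "\<dots> = y"
    using assms(1) Suc.prems by (metis bij_betw_imp_surj_on f_inv_into_f)
  finally show ?case .
qed simp

context
  fixes G :: "('g, 'b) monoid_scheme" (structure) and U :: "'c::zero set" and f :: "'g \<Rightarrow> 'c \<Rightarrow> 'g"
  assumes group: "group G"
    and closed: "\<And>g u. g \<in> carrier G \<Longrightarrow> u \<in> U \<Longrightarrow> f g u \<in> carrier G"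
    and f0_hom: "(\<lambda>g. f g 0) \<in> hom G G"
    and linear: "\<And>g u. g \<in> carrier G \<Longrightarrow> u \<in> U \<Longrightarrow> f g u = f \<one> u \<otimes> f g 0"
begin

lemma phi_closed:
  "x \<in> carrier G \<Longrightarrow> \<forall>i. u i \<in> U \<Longrightarrow> phi f k x u \<in> carrier G"
  by (induction k) (auto intro: closed)

lemma funpow_f0_closed: "x \<in> carrier G \<Longrightarrow> ((\<lambda>g. f g 0) ^^ n) x \<in> carrier G"
  by (induction n) (auto intro: hom_in_carrier[OF f0_hom])

lemma phi_eq_phi_one_mult:
  assumes u: "\<forall>i. u i \<in> U" and x: "x \<in> carrier G"
  shows "phi f k x u = phi f k \<one> u \<otimes> ((\<lambda>g. f g 0) ^^ k) x"
proof (induction k)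
  case 0
  show ?case using x group by (simp add: group.is_monoid)
next
  interpret group G by (fact group)
  case (Suc k)
  let ?a = "f \<one> (u k)" and ?p = "phi f k \<one> u" and ?q = "((\<lambda>g. f g 0) ^^ k) x"
  have carr: "?a \<in> carrier G" "?p \<in> carrier G" "?q \<in> carrier G" "f ?p 0 \<in> carrier G" "f ?q 0 \<in> carrier G"
    using u x closed phi_closed funpow_f0_closed hom_in_carrier[OF f0_hom] by auto
  have "phi f (Suc k) x u = ?a \<otimes> f (phi f k x u) 0"
    using linear[OF phi_closed[OF x u]] u by simp
  also have "\<dots> = ?a \<otimes> f (?p \<otimes> ?q) 0"
    using Suc.IH by simp
  also have "\<dots> = (?a \<otimes> f ?p 0) \<otimes> f ?q 0"
    using carr by (simp add: hom_mult[OF f0_hom] m_assoc)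
  also have "?a \<otimes> f ?p 0 = phi f (Suc k) \<one> u"
    using linear[OF carr(2)] u by simp
  finally show ?case by simp
qed

lemma reach_set_closed: "reach_set G U f \<subseteq> carrier G"
  unfolding reach_set_def using phi_closed group.is_monoid[OF group] by blast

lemma phi_in_reach_set:
  assumes "x \<in> reach_set G U f" and "\<forall>i. u i \<in> U"
  shows "phi f k x u \<in> reach_set G U f"
proof -
  obtain j v where x: "x = phi f j \<one> v" and "j \<ge> 1" and v: "\<forall>i. v i \<in> U"
    using assms(1) by (auto simp: reach_set_def)
  let ?w = "\<lambda>i. if i < j then v i else u (i - j)"
  have "phi f k x u = phi f (j + k) \<one> ?w"
    using x by (simp add: phi_append_controls)
  moreover have "\<forall>i. ?w i \<in> U"
    using assms(2) v by simp
  ultimately show ?thesis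
    using \<open>j \<ge> 1\<close> unfolding reach_set_def by fastforce
qed

lemma reach_set_mult_closed:
  assumes bij: "bij_betw (\<lambda>g. f g 0) (carrier G) (carrier G)" and g: "g \<in> carrier G"
    and preimages_reachable: "\<And>k. (inv_into (carrier G) (\<lambda>g. f g 0) ^^ k) g \<in> reach_set G U f"
  shows "(\<lambda>h. h \<otimes> g) ` reach_set G U f \<subseteq> reach_set G U f"
proof clarify
  fix h assume "h \<in> reach_set G U f"
  then obtain k u where h: "h = phi f k \<one> u" and u: "\<forall>i. u i \<in> U"
    by (auto simp: reach_set_def)
  let ?x = "(inv_into (carrier G) (\<lambda>g. f g 0) ^^ k) g"
  have "?x \<in> carrier G"
    using preimages_reachable reach_set_closed by blast
  then have "phi f k ?x u = h \<otimes> g"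
    using h u phi_eq_phi_one_mult funpow_inv_into_right[OF bij g] by simp
  then show "h \<otimes> g \<in> reach_set G U f"
    using phi_in_reach_set[OF preimages_reachable u] by metis
qed

end

theorem lemma2p15:
  fixes G :: "('g, 'b) monoid_scheme" and T :: "'g topology"
    and U :: "(real^'m) set" and f :: "'g \<Rightarrow> real^'m \<Rightarrow> 'g" and g :: 'g
  assumes "connected_loc_euclidean_group G T TYPE('n::finite)"
    and "compact U" and "0 \<in> interior U"
    and "linear_control_system G T U f"
    and "g \<in> reach_set G U f"
    and "\<forall>k::int. f0_pow G (\<lambda>x. f x 0) k g \<in> reach_set G U f"
  shows "(\<lambda>h. h \<otimes>\<^bsub>G\<^esub> g) ` reach_set G U f \<subseteq> reach_set G U f"
proof -
  have iso: "(\<lambda>x. f x 0) \<in> iso G G"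
    and closed: "\<And>x u. x \<in> carrier G \<Longrightarrow> u \<in> U \<Longrightarrow> f x u \<in> carrier G"
    and linear: "\<And>x u. x \<in> carrier G \<Longrightarrow> u \<in> U \<Longrightarrow> f x u = f \<one>\<^bsub>G\<^esub> u \<otimes>\<^bsub>G\<^esub> f x 0"
    using assms(4) unfolding linear_control_system_def by blast+
  have group: "group G"
    using assms(1) by (simp add: connected_loc_euclidean_group_def)
  have hom: "(\<lambda>x. f x 0) \<in> hom G G"
    using iso by (simp add: iso_def)
  note system = group closed hom linear
  have preimages_reachable: "(inv_into (carrier G) (\<lambda>x. f x 0) ^^ k) g \<in> reach_set G U f" for k
  proof (cases "k = 0")
    case True
    then show ?thesis using assms(5) by simp
  next
    case False
    then show ?thesis using assms(6)[rule_format, of "- int k"] by (simp add: f0_pow_def)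
  qed
  have bij: "bij_betw (\<lambda>x. f x 0) (carrier G) (carrier G)"
    using iso by (simp add: iso_def)
  have "g \<in> carrier G"
    using assms(5) reach_set_closed[where G = G and U = U and f = f, OF system] by blast
  then show ?thesis
    using reach_set_mult_closed[where G = G and U = U and f = f, OF system bij _ preimages_reachable]
    by blast
qed

end
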